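(* Let $m\ge3$ be odd, $s$ a positive integer, $n=sm$, and $\Gamma=C_n[mK_1]$. For $i\in\{2,\dots,n\}$ let $\ell_i=1+\frac{(i-2)(i-1)}{2}$, and define $$\sigma_1=(c,1,1,\dots,1)r,\qquad \sigma_2=(t,tc^{\ell_2},tc^{\ell_3},\dots,tc^{\ell_n})z,\qquad G=\langle\sigma_1,\sigma_2\rangle.$$ Then $\sigma_1$ has order $mn$, $\sigma_2$ has order $2m$, $\sigma_1\sigma_2$ has order $2$, and $|G|=2m^2n$.
   Context: $C_n[mK_1]$ is the graph with vertex set $\{1,\dots,n\}\times\{1,\dots,m\}$ in which $(i_1,j_1)$ is adjacent to $(i_2,j_2)$ if and only if $i_1\equiv i_2\pm1\pmod n$ (residues mod $n$ taken in $\{1,\dots,n\}$). Permutations act on the right ($x\alpha$ is the image of $x$) and products are composed left to right, both in $S_m$ and in $\mathrm{Aut}(\Gamma)$. For $\alpha_1,\dots,\alpha_n\in S_m$ and a permutation $x$ of $\{1,\dots,n\}$ in the dihedral group $D_n=\langle r,z\rangle$, $(\alpha_1,\dots,\alpha_n)x$ denotes the automorphism of $\Gamma$ mapping $(i,j)\mapsto(ix,\,j\alpha_i)$; $1$ denotes an identity permutation. Here $c=(1\,2\,\cdots\,m)\in S_m$; $t\in S_m$ fixes $1$ and maps $j\mapsto m-j+2$ for $2\le j\le m$; $r$ is the permutation $i\mapsto i+1 \pmod n$ of $\{1,\dots,n\}$; and $z$ fixes $1$ and maps $j\mapsto n-j+2$ for $2\le j\le n$. *)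

theory Defs
  imports "HOL-Algebra.Algebra"
begin

definition verts :: "nat \<Rightarrow> nat \<Rightarrow> (nat \<times> nat) set" where
  "verts n m = {1..n} \<times> {1..m}"

definition cyc_succ :: "nat \<Rightarrow> nat \<Rightarrow> nat" where
  "cyc_succ n i = i mod n + 1"

definition adj :: "nat \<Rightarrow> nat \<Rightarrow> nat \<times> nat \<Rightarrow> nat \<times> nat \<Rightarrow> bool" where
  "adj n m u v \<longleftrightarrow> u \<in> verts n m \<and> v \<in> verts n m \<and>
     (fst u = cyc_succ n (fst v) \<or> fst v = cyc_succ n (fst u))"

text \<open>Automorphism group Aut(C_n[mK_1]) as a subgroup of the symmetric group on the
  vertex set (product = function composition, compose S g f = g \<circ> f on S).\<close>
definition Aut :: "nat \<Rightarrow> nat \<Rightarrow> (nat \<times> nat \<Rightarrow> nat \<times> nat) monoid" where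
  "Aut n m = (BijGroup (verts n m))\<lparr> carrier :=
     {f \<in> Bij (verts n m). \<forall>u\<in>verts n m. \<forall>v\<in>verts n m. adj n m u v \<longleftrightarrow> adj n m (f u) (f v)} \<rparr>"

text \<open>The automorphism (alpha_1,...,alpha_n)x : (i,j) maps to (ix, j alpha_i),
  given as an extensional function on the vertex set.\<close>
definition wr :: "nat \<Rightarrow> nat \<Rightarrow> (nat \<Rightarrow> nat \<Rightarrow> nat) \<Rightarrow> (nat \<Rightarrow> nat) \<Rightarrow> nat \<times> nat \<Rightarrow> nat \<times> nat" where
  "wr n m \<alpha> x = restrict (\<lambda>(i, j). (x i, \<alpha> i j)) (verts n m)"

text \<open>c = (1 2 ... m) and its powers: c^k maps j to ((j - 1 + k) mod m) + 1.\<close>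
definition cpow :: "nat \<Rightarrow> nat \<Rightarrow> nat \<Rightarrow> nat" where
  "cpow m k j = (j - 1 + k) mod m + 1"

text \<open>t fixes 1 and maps j to m - j + 2 for 2 \<le> j \<le> m (same formula gives z on {1..n}).\<close>
definition refl_perm :: "nat \<Rightarrow> nat \<Rightarrow> nat" where
  "refl_perm m j = (if j = 1 then 1 else m + 2 - j)"

definition ell :: "nat \<Rightarrow> nat" where
  "ell i = 1 + (i - 2) * (i - 1) div 2"

definition sigma1 :: "nat \<Rightarrow> nat \<Rightarrow> nat \<times> nat \<Rightarrow> nat \<times> nat" where
  "sigma1 n m = wr n m (\<lambda>i j. if i = 1 then cpow m 1 j else j) (cyc_succ n)"

text \<open>sigma_2 = (t, t c^ell_2, ..., t c^ell_n) z. Products are left to right,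
  so j (t c^l) = (j t) c^l.\<close>
definition sigma2 :: "nat \<Rightarrow> nat \<Rightarrow> nat \<times> nat \<Rightarrow> nat \<times> nat" where
  "sigma2 n m = wr n m (\<lambda>i j. if i = 1 then refl_perm m j else cpow m (ell i) (refl_perm m j))
                       (refl_perm n)"

end

theory Submission
  imports Defs
begin

(* Label the vertex (i, j) by an integer so that, modulo mn, sigma1 becomes the translation
   x -> x + 1: sigma1 is a single mn-cycle. In these coordinates sigma2 is the quadratic map
   x -> -x + n x (x - 1) / 2, and since m divides n every relation needed reduces to a polynomial
   congruence modulo mn: sigma2^2 is x -> (1 + n) x, sigma2 sigma1^a = sigma1^a' sigma2^(odd), and
   sigma2 sigma1 = sigma1^-1 sigma2^-1. Hence the group is the set of products sigma1^a sigma2^k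
   with a < mn and k < 2m, and these are pairwise distinct because sigma2 fixes the vertex
   labelled 0 while sigma1^a sends it to the vertex labelled a. *)

lemma (in group) nat_pow_mod_ord:
  assumes "x \<in> carrier G"
  shows "x [^] (k mod ord x) = x [^] k"
proof -
  have "x [^] k = x [^] (k mod ord x + ord x * (k div ord x))" by simp
  also have "\<dots> = x [^] (k mod ord x) \<otimes> x [^] (ord x * (k div ord x))"
    by (rule nat_pow_mult[OF assms, symmetric])
  also have "x [^] (ord x * (k div ord x)) = \<one>"
    using assms by (simp flip: nat_pow_pow)
  finally show ?thesis using assms by simp
qed

lemma (in group) inv_eq_nat_pow_ord:
  assumes "x \<in> carrier G" "0 < ord x"
  shows "inv x = x [^] (ord x - 1)"
proof (rule inv_equality)
  show "x [^] (ord x - 1) \<otimes> x = \<one>"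
    using assms nat_pow_Suc[of x "ord x - 1"] by simp
qed (use assms in auto)

section \<open>Automorphisms of the lexicographic product of a cycle\<close>

lemma relation_automorphisms_subgroup:
  "subgroup {f \<in> Bij S. \<forall>u\<in>S. \<forall>v\<in>S. R u v \<longleftrightarrow> R (f u) (f v)} (BijGroup S)"
  (is "subgroup ?H _")
proof (rule subgroup.intro)
  show "?H \<subseteq> carrier (BijGroup S)" by (auto simp: BijGroup_def)
next
  fix f g assume f: "f \<in> ?H" and g: "g \<in> ?H"
  have "R u v \<longleftrightarrow> R (compose S f g u) (compose S f g v)" if "u \<in> S" "v \<in> S" for u v
  proof -
    have "g u \<in> S" "g v \<in> S" using g that Bij_imp_funcset by blast+
    then show ?thesis using f g that by (simp add: compose_def)
  qed
  then show "f \<otimes>\<^bsub>BijGroup S\<^esub> g \<in> ?H"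
    using f g by (simp add: BijGroup_def compose_Bij)
next
  show "\<one>\<^bsub>BijGroup S\<^esub> \<in> ?H" by (simp add: BijGroup_def id_Bij)
next
  fix f assume f: "f \<in> ?H"
  then have f_Bij: "f \<in> Bij S" by simp
  have "f (inv_into S f u) = u" "inv_into S f u \<in> S" if "u \<in> S" for u
    using f_Bij that by (auto simp: Bij_def bij_betw_def f_inv_into_f Bij_inv_into_mem)
  then have "(\<lambda>u \<in> S. inv_into S f u) \<in> ?H"
    using f restrict_inv_into_Bij[OF f_Bij] by auto
  then show "inv\<^bsub>BijGroup S\<^esub> f \<in> ?H" using inv_BijGroup[OF f_Bij] by simp
qed

lemma Aut_carrier:
  "carrier (Aut n m) =
     {f \<in> Bij (verts n m). \<forall>u\<in>verts n m. \<forall>v\<in>verts n m. adj n m u v \<longleftrightarrow> adj n m (f u) (f v)}"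
  by (simp add: Aut_def)

lemma group_Aut: "group (Aut n m)"
  unfolding Aut_def
  by (rule subgroup.subgroup_is_group[OF relation_automorphisms_subgroup group_BijGroup])

lemma Aut_mult:
  "f \<in> carrier (Aut n m) \<Longrightarrow> g \<in> carrier (Aut n m) \<Longrightarrow> f \<otimes>\<^bsub>Aut n m\<^esub> g = compose (verts n m) f g"
  by (simp add: Aut_def BijGroup_def)

lemma Aut_one: "\<one>\<^bsub>Aut n m\<^esub> = (\<lambda>u \<in> verts n m. u)"
  by (simp add: Aut_def BijGroup_def)

definition cycle_adj :: "nat \<Rightarrow> nat \<Rightarrow> nat \<Rightarrow> bool" where
  "cycle_adj n i i' \<longleftrightarrow> i = cyc_succ n i' \<or> i' = cyc_succ n i"

lemma Aut_carrierI:
  assumes "f \<in> Bij (verts n m)"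
    and "\<And>u. u \<in> verts n m \<Longrightarrow> fst (f u) = \<phi> (fst u)"
    and "\<And>i i'. i \<in> {1..n} \<Longrightarrow> i' \<in> {1..n} \<Longrightarrow> cycle_adj n (\<phi> i) (\<phi> i') \<longleftrightarrow> cycle_adj n i i'"
  shows "f \<in> carrier (Aut n m)"
proof -
  have "adj n m u v \<longleftrightarrow> adj n m (f u) (f v)" if "u \<in> verts n m" "v \<in> verts n m" for u v
  proof -
    have "f u \<in> verts n m" "f v \<in> verts n m"
      using assms(1) that Bij_imp_funcset by blast+
    moreover have "fst u \<in> {1..n}" "fst v \<in> {1..n}"
      using that by (auto simp: verts_def)
    then have "cycle_adj n (fst (f u)) (fst (f v)) \<longleftrightarrow> cycle_adj n (fst u) (fst v)"
      using assms(2,3) that by simp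
    ultimately show ?thesis using that by (simp add: adj_def cycle_adj_def)
  qed
  then show ?thesis using assms(1) by (simp add: Aut_carrier)
qed

lemma cyc_succ_eq: "i \<in> {1..n} \<Longrightarrow> cyc_succ n i = (if i = n then 1 else i + 1)"
  by (auto simp: cyc_succ_def)

lemma cyc_succ_in: "i \<in> {1..n} \<Longrightarrow> cyc_succ n i \<in> {1..n}"
  by (auto simp: cyc_succ_eq)

lemma inj_on_cyc_succ: "inj_on (cyc_succ n) {1..n}"
proof (rule inj_onI)
  fix i j assume "i \<in> {1..n}" "j \<in> {1..n}" "cyc_succ n i = cyc_succ n j"
  then show "i = j" by (cases "i = n"; cases "j = n") (simp_all add: cyc_succ_eq)
qed

lemma cycle_adj_cyc_succ:
  assumes "i \<in> {1..n}" "i' \<in> {1..n}"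
  shows "cycle_adj n (cyc_succ n i) (cyc_succ n i') \<longleftrightarrow> cycle_adj n i i'"
proof -
  have "cyc_succ n j = cyc_succ n (cyc_succ n j') \<longleftrightarrow> j = cyc_succ n j'"
    if "j \<in> {1..n}" "j' \<in> {1..n}" for j j'
    using inj_on_eq_iff[OF inj_on_cyc_succ that(1) cyc_succ_in[OF that(2)]] .
  then show ?thesis using assms by (auto simp: cycle_adj_def)
qed

lemma refl_perm_in: "i \<in> {1..n} \<Longrightarrow> refl_perm n i \<in> {1..n}"
  by (auto simp: refl_perm_def)

lemma inj_on_refl_perm: "inj_on (refl_perm n) {1..n}"
proof (rule inj_onI)
  fix i j assume "i \<in> {1..n}" "j \<in> {1..n}" "refl_perm n i = refl_perm n j"
  then show "i = j" by (cases "i = 1"; cases "j = 1") (auto simp: refl_perm_def)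
qed

lemma cyc_succ_refl_perm_cyc_succ:
  assumes "i \<in> {1..n}"
  shows "cyc_succ n (refl_perm n (cyc_succ n i)) = refl_perm n i"
proof -
  consider "i = n" | "i = 1" "i < n" | "1 < i" "i < n" using assms by fastforce
  then show ?thesis
  proof cases
    case 3
    then have "n + 1 - i \<in> {1..n}" "n + 1 - i \<noteq> n" by auto
    then show ?thesis using 3 by (simp add: cyc_succ_eq refl_perm_def)
  qed (use assms in \<open>auto simp: cyc_succ_eq refl_perm_def\<close>)
qed

lemma cycle_adj_refl_perm:
  assumes "i \<in> {1..n}" "i' \<in> {1..n}"
  shows "cycle_adj n (refl_perm n i) (refl_perm n i') \<longleftrightarrow> cycle_adj n i i'"
proof -
  have "refl_perm n j = cyc_succ n (refl_perm n j') \<longleftrightarrow> j' = cyc_succ n j"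
    if "j \<in> {1..n}" "j' \<in> {1..n}" for j j'
  proof -
    have "cyc_succ n (refl_perm n j') = cyc_succ n (refl_perm n (cyc_succ n j)) \<longleftrightarrow>
        j' = cyc_succ n j"
      using inj_on_eq_iff[OF inj_on_cyc_succ refl_perm_in refl_perm_in]
        inj_on_eq_iff[OF inj_on_refl_perm] that cyc_succ_in by metis
    then show ?thesis using cyc_succ_refl_perm_cyc_succ[OF that(1)] by auto
  qed
  then show ?thesis using assms by (auto simp: cycle_adj_def)
qed

lemma refl_perm_eq_mod:
  assumes "1 \<le> j" "j \<le> m"
  shows "int (refl_perm m j) - 1 = (1 - int j) mod int m"
proof (cases "j = 1")
  case False
  have "(1 - int j) mod int m = (1 - int j + int m) mod int m" by simp
  also have "\<dots> = 1 - int j + int m"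
    using assms False by (intro mod_pos_pos_trivial) auto
  finally show ?thesis using assms False by (simp add: refl_perm_def)
qed (simp add: refl_perm_def)

section \<open>Labelling the vertices by residues modulo mn\<close>

text \<open>Modulo mn these labels number the vertices along the single mn-cycle of sigma1, starting
  at (1, 1); vertex_of inverts the labelling.\<close>

definition label :: "nat \<Rightarrow> nat \<times> nat \<Rightarrow> int" where
  "label n v = int (fst v) - 1 + int n * (int (snd v) - (if fst v = 1 then 1 else 2))"

definition vertex_of :: "nat \<Rightarrow> nat \<Rightarrow> int \<Rightarrow> nat \<times> nat" where
  "vertex_of n m x = (nat (x mod int n) + 1, nat (((x + int n - 1) div int n) mod int m) + 1)"

definition lift :: "nat \<Rightarrow> nat \<Rightarrow> (int \<Rightarrow> int) \<Rightarrow> nat \<times> nat \<Rightarrow> nat \<times> nat" where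
  "lift n m f = (\<lambda>v \<in> verts n m. vertex_of n m (f (label n v)))"

definition respects_mod :: "int \<Rightarrow> (int \<Rightarrow> int) \<Rightarrow> bool" where
  "respects_mod N f \<longleftrightarrow> (\<forall>x y. N dvd x - y \<longrightarrow> N dvd f x - f y)"

lemma respects_mod_quadratic:
  assumes "\<And>x. f x = c\<^sub>0 + c\<^sub>1 * x + c\<^sub>2 * (x * (x - 1))"
  shows "respects_mod N f"
  unfolding respects_mod_def
proof (intro allI impI)
  fix x y :: int assume "N dvd x - y"
  moreover have "f x - f y = (x - y) * (c\<^sub>1 + c\<^sub>2 * (x + y - 1))"
    by (simp add: assms algebra_simps)
  ultimately show "N dvd f x - f y" by simp
qed

lemma respects_mod_id: "respects_mod N (\<lambda>x. x)"
  by (simp add: respects_mod_def)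

lemma respects_mod_shift: "respects_mod N (\<lambda>x. x + a)"
  by (rule respects_mod_quadratic[where c\<^sub>0 = a and c\<^sub>1 = 1 and c\<^sub>2 = 0]) simp

locale labelled_blowup =
  fixes n m :: nat
  assumes n_pos: "0 < n" and m_pos: "0 < m"
begin

abbreviation N :: int where "N \<equiv> int m * int n"

lemma vertex_of_add_mult:
  assumes "0 \<le> r" "r < int n"
  shows "vertex_of n m (r + q * int n) = (nat r + 1, nat ((q + (if r = 0 then 0 else 1)) mod int m) + 1)"
proof -
  have "(r + int n - 1) div int n = (if r = 0 then 0 else 1)"
  proof (cases "r = 0")
    case False
    then show ?thesis
      using assms div_pos_geq[of "int n" "r + int n - 1"] by simp
  qed (use assms in \<open>simp add: div_pos_neg_trivial\<close>)
  moreover have "r + q * int n + int n - 1 = (r + int n - 1) + q * int n" by simp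
  then have "(r + q * int n + int n - 1) div int n = q + (r + int n - 1) div int n"
    using n_pos by (metis div_mult_self1 of_nat_0_less_iff less_irrefl)
  ultimately show ?thesis using assms by (simp add: vertex_of_def add.commute)
qed

lemma vertex_of_in_verts: "vertex_of n m x \<in> verts n m"
proof -
  have "nat (x mod int n) < n" "nat (((x + int n - 1) div int n) mod int m) < m"
    using n_pos m_pos by (simp_all add: nat_less_iff)
  then show ?thesis by (simp add: vertex_of_def verts_def)
qed

lemma vertex_of_label:
  assumes "v \<in> verts n m"
  shows "vertex_of n m (label n v) = v"
proof -
  obtain i j where v: "v = (i, j)" "1 \<le> i" "i \<le> n" "1 \<le> j" "j \<le> m"
    using assms by (auto simp: verts_def)
  define q where "q = int j - (if i = 1 then 1 else 2)"
  have "label n v = (int i - 1) + q * int n"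
    by (simp add: label_def v q_def)
  moreover have "q + (if int i - 1 = 0 then 0 else 1) = int j - 1"
    by (simp add: q_def)
  moreover have "nat (int i - 1) = i - 1" "nat (int j - 1) = j - 1"
    using v by auto
  ultimately show ?thesis
    using vertex_of_add_mult[of "int i - 1" q] v by simp
qed

lemma vertex_of_eq_iff: "vertex_of n m x = vertex_of n m y \<longleftrightarrow> N dvd x - y"
proof -
  define c :: "int \<Rightarrow> int" where "c z = (if z mod int n = 0 then 0 else 1)" for z
  have vertex_of_z: "vertex_of n m z = (nat (z mod int n) + 1, nat ((z div int n + c z) mod int m) + 1)" for z
    using vertex_of_add_mult[of "z mod int n" "z div int n"] n_pos by (simp add: c_def)
  have "vertex_of n m x = vertex_of n m y \<longleftrightarrow>
      x mod int n = y mod int n \<and> (x div int n + c x) mod int m = (y div int n + c y) mod int m"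
    using n_pos m_pos by (simp add: vertex_of_z eq_nat_nat_iff)
  also have "\<dots> \<longleftrightarrow>
      x mod int n = y mod int n \<and> int m dvd (x div int n + c x) - (y div int n + c y)"
    by (simp add: mod_eq_dvd_iff)
  also have "\<dots> \<longleftrightarrow> x mod int n = y mod int n \<and> int m dvd x div int n - y div int n"
    by (auto simp: c_def)
  also have "\<dots> \<longleftrightarrow> N dvd x - y"
  proof -
    have x_y: "x - y = int n * (x div int n - y div int n) + (x mod int n - y mod int n)"
      by (simp add: algebra_simps)
    show ?thesis
    proof
      assume "x mod int n = y mod int n \<and> int m dvd x div int n - y div int n"
      then show "N dvd x - y" using x_y by (simp add: mult.commute)
    next
      assume N_dvd: "N dvd x - y"
      then have mod_eq: "x mod int n = y mod int n"
        by (simp add: mod_eq_dvd_iff dvd_mult_right)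
      then have "int n * int m dvd int n * (x div int n - y div int n)"
        using N_dvd x_y by (simp add: mult.commute)
      then show "x mod int n = y mod int n \<and> int m dvd x div int n - y div int n"
        using n_pos mod_eq by simp
    qed
  qed
  finally show ?thesis .
qed

lemma label_vertex_of: "N dvd label n (vertex_of n m x) - x"
  using vertex_of_label[OF vertex_of_in_verts] vertex_of_eq_iff by simp

lemma lift_vertex_of: "respects_mod N f \<Longrightarrow> lift n m f (vertex_of n m x) = vertex_of n m (f x)"
  using label_vertex_of[of x] vertex_of_in_verts
  by (auto simp: lift_def respects_mod_def vertex_of_eq_iff)

lemma lift_cong: "(\<And>x. N dvd f x - g x) \<Longrightarrow> lift n m f = lift n m g"
  unfolding lift_def by (intro restrict_ext) (simp add: vertex_of_eq_iff)

lemma lift_eq_lift_iff: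
  assumes "respects_mod N f" "respects_mod N g"
  shows "lift n m f = lift n m g \<longleftrightarrow> (\<forall>x. N dvd f x - g x)"
proof
  assume "lift n m f = lift n m g"
  then have "vertex_of n m (f x) = vertex_of n m (g x)" for x
    using lift_vertex_of[OF assms(1), of x] lift_vertex_of[OF assms(2), of x] by simp
  then show "\<forall>x. N dvd f x - g x" by (simp add: vertex_of_eq_iff)
qed (simp add: lift_cong)

lemma lift_id: "lift n m (\<lambda>x. x) = (\<lambda>v \<in> verts n m. v)"
  by (simp add: lift_def vertex_of_label cong: restrict_cong)

lemma compose_lift:
  assumes "respects_mod N f"
  shows "compose (verts n m) (lift n m f) (lift n m g) = lift n m (f \<circ> g)"
proof
  fix v show "compose (verts n m) (lift n m f) (lift n m g) v = lift n m (f \<circ> g) v"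
    using lift_vertex_of[OF assms] vertex_of_in_verts by (simp add: compose_def lift_def)
qed

lemma lift_Bij:
  assumes "respects_mod N g" "\<And>x. N dvd g (f x) - x"
  shows "lift n m f \<in> Bij (verts n m)"
proof -
  have "lift n m g (lift n m f v) = v" if "v \<in> verts n m" for v
    using fun_cong[OF compose_lift[OF assms(1), of f], of v] lift_cong[of "g \<circ> f" "\<lambda>x. x"]
      assms(2) that by (simp add: compose_def lift_id)
  then have "inj_on (lift n m f) (verts n m)" by (metis inj_onI)
  moreover have "lift n m f ` verts n m \<subseteq> verts n m"
    by (auto simp: lift_def vertex_of_in_verts)
  ultimately have "bij_betw (lift n m f) (verts n m) (verts n m)"
    by (simp add: bij_betw_def endo_inj_surj verts_def)
  then show ?thesis by (simp add: Bij_def lift_def)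
qed

lemma lift_mult:
  assumes "lift n m f \<in> carrier (Aut n m)" "lift n m g \<in> carrier (Aut n m)" "respects_mod N f"
  shows "lift n m f \<otimes>\<^bsub>Aut n m\<^esub> lift n m g = lift n m (f \<circ> g)"
  using assms by (simp add: Aut_mult compose_lift)

end

section \<open>The generators as lifted polynomial maps\<close>

locale odd_cycle_blowup =
  fixes m s n :: nat
  assumes m_ge_3: "3 \<le> m" and odd_m: "odd m" and s_pos: "0 < s" and n_eq: "n = s * m"
begin

lemma n_ge_3: "3 \<le> n"
proof -
  have "1 * m \<le> s * m" using s_pos by (intro mult_le_mono1) simp
  then show ?thesis using m_ge_3 n_eq by linarith
qed

sublocale labelled_blowup n m
  using m_ge_3 n_ge_3 by unfold_locales auto

text \<open>half is the inverse of 2 modulo m, so n * half * x * (x - 1) agrees with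
  n * (x choose 2) modulo mn.\<close>

definition half :: int where "half = int ((m + 1) div 2)"

lemma two_half: "2 * half = int m + 1"
  using odd_m by (auto simp: half_def elim!: oddE)

lemma int_n_eq: "int n = int s * int m"
  by (simp add: n_eq)

definition stretch :: "int \<Rightarrow> int \<Rightarrow> int" where
  "stretch b x = x + int n * b * x"

definition reflect :: "int \<Rightarrow> int \<Rightarrow> int" where
  "reflect b x = - x - int n * b * x + int n * half * x * (x - 1)"

lemma respects_mod_stretch: "respects_mod N (stretch b)"
  by (rule respects_mod_quadratic[where c\<^sub>0 = 0 and c\<^sub>1 = "1 + int n * b" and c\<^sub>2 = 0])
    (simp add: stretch_def algebra_simps)

lemma respects_mod_reflect: "respects_mod N (reflect b)"
  by (rule respects_mod_quadratic[where c\<^sub>0 = 0 and c\<^sub>1 = "- 1 - int n * b" and c\<^sub>2 = "int n * half"])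
    (simp add: reflect_def algebra_simps)

lemma reflect_first_column: "N dvd reflect 0 (k * int n) - (- k) * int n"
  unfolding dvd_def reflect_def
  by (rule exI[of _ "int s * half * k * (k * int n - 1)"]) (use int_n_eq in Groebner_Basis.algebra)

lemma reflect_other_column:
  "N dvd reflect 0 (p + (k - 1) * int n) - ((int n - p) + (- k + half * p * (p - 1)) * int n)"
  unfolding dvd_def reflect_def
  by (rule exI[of _ "int s * half * (k - 1) * (2 * p + (k - 1) * int n - 1)"]) (use int_n_eq in Groebner_Basis.algebra)

lemma stretch_reflect: "N dvd stretch b (reflect 0 x) - reflect b x"
  unfolding dvd_def reflect_def stretch_def
  by (rule exI[of _ "int s * b * half * x * (x - 1)"]) (use int_n_eq in Groebner_Basis.algebra)

lemma reflect_reflect: "N dvd reflect b (reflect 0 x) - stretch (b + 1) x"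
  unfolding dvd_def reflect_def stretch_def
  by (rule exI[of _ "x + int s * (- b * (half * x * (x - 1)) + half * (- 2 * (half * x * (x - 1)) * x
      - half * x * (x - 1) + int n * (half * x * (x - 1)) * (half * x * (x - 1))))"])
    (use int_n_eq two_half in Groebner_Basis.algebra)

lemma reflect_shift: "N dvd reflect 0 (x + a) - (reflect (- a) x + reflect 0 a)"
  unfolding dvd_def reflect_def
  by (rule exI[of _ "a * x"]) (use two_half in Groebner_Basis.algebra)

lemma reflect_cong: "int m dvd b - b' \<Longrightarrow> N dvd reflect b x - reflect b' x"
proof -
  assume "int m dvd b - b'"
  then have "N dvd int n * (b - b') * x" by (simp add: mult.commute mult_dvd_mono)
  moreover have "reflect b x - reflect b' x = - (int n * (b - b') * x)"
    by (simp add: reflect_def algebra_simps)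
  ultimately show ?thesis by simp
qed

lemma ell_cong:
  assumes "2 \<le> i"
  shows "int m dvd int (ell i) - (1 + half * (int i - 1) * (int i - 2))"
proof -
  obtain k where i: "i = k + 2" using assms le_Suc_ex by (metis add.commute)
  have "1 \<le> ell i" by (simp add: ell_def)
  then have "2 * (int (ell i) - 1) = int (2 * (ell i - 1))" by simp
  also have "2 * (ell i - 1) = k * (k + 1)" by (simp add: ell_def i)
  finally have ell: "2 * (int (ell i) - 1) = int k * (int k + 1)" by (simp add: algebra_simps)
  have "int i = int k + 2" by (simp add: i)
  then show ?thesis
    unfolding dvd_def
    by (intro exI[of _ "1 - int (ell i)"]) (use ell two_half in Groebner_Basis.algebra)
qed

lemma sigma1_eq_lift: "sigma1 n m = lift n m (\<lambda>x. x + 1)"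
proof
  fix v show "sigma1 n m v = lift n m (\<lambda>x. x + 1) v"
  proof (cases "v \<in> verts n m")
    case True
    then obtain i j where v: "v = (i, j)" "1 \<le> i" "i \<le> n" "1 \<le> j" "j \<le> m"
      by (auto simp: verts_def)
    consider "i = 1" | "1 < i" "i < n" | "i = n" using v n_ge_3 by linarith
    then have "vertex_of n m (label n v + 1) = (i mod n + 1, if i = 1 then j mod m + 1 else j)"
    proof cases
      case 1
      then have "label n v + 1 = 1 + (int j - 1) * int n" by (simp add: label_def v algebra_simps)
      then show ?thesis
        using vertex_of_add_mult[of 1 "int j - 1"] n_ge_3 1 v by (simp add: nat_mod_as_int add.commute)
    next
      case 2
      then have "label n v + 1 = int i + (int j - 2) * int n" by (simp add: label_def v algebra_simps)
      then show ?thesis using vertex_of_add_mult[of "int i" "int j - 2"] 2 v by simp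
    next
      case 3
      then have "label n v + 1 = 0 + (int j - 1) * int n"
        using n_ge_3 by (simp add: label_def v algebra_simps)
      then show ?thesis using vertex_of_add_mult[of 0 "int j - 1"] n_ge_3 3 v by simp
    qed
    moreover have "sigma1 n m v = (i mod n + 1, if i = 1 then j mod m + 1 else j)"
      using True v by (simp add: sigma1_def wr_def cyc_succ_def cpow_def)
    ultimately show ?thesis using True by (simp add: lift_def)
  qed (simp add: sigma1_def wr_def lift_def)
qed

lemma sigma2_first_column:
  assumes "1 \<le> j" "j \<le> m"
  shows "lift n m (reflect 0) (1, j) = sigma2 n m (1, j)"
proof -
  have v: "(1, j) \<in> verts n m" using assms n_ge_3 by (simp add: verts_def)
  have "lift n m (reflect 0) (1, j) = vertex_of n m (reflect 0 ((int j - 1) * int n))"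
    using v by (simp add: lift_def label_def algebra_simps)
  also have "\<dots> = vertex_of n m (0 + (1 - int j) * int n)"
    using reflect_first_column[of "int j - 1"] by (simp add: vertex_of_eq_iff)
  also have "\<dots> = (1, nat ((1 - int j) mod int m) + 1)"
    using vertex_of_add_mult[of 0 "1 - int j"] n_ge_3 by simp
  also have "nat ((1 - int j) mod int m) + 1 = refl_perm m j"
    using refl_perm_eq_mod[OF assms, symmetric] refl_perm_in[of j m] assms by (simp add: nat_diff_distrib')
  finally show ?thesis
    using v by (simp add: sigma2_def wr_def refl_perm_def)
qed

lemma sigma2_other_column:
  assumes "2 \<le> i" "i \<le> n" "1 \<le> j" "j \<le> m"
  shows "lift n m (reflect 0) (i, j) = sigma2 n m (i, j)"
proof -
  define p k where "p = int i - 1" and "k = int j - 1"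
  have v: "(i, j) \<in> verts n m" using assms by (simp add: verts_def)
  have "lift n m (reflect 0) (i, j) = vertex_of n m (reflect 0 (p + (k - 1) * int n))"
    using v assms by (simp add: lift_def label_def p_def k_def algebra_simps)
  also have "\<dots> = vertex_of n m ((int n - p) + (- k + half * p * (p - 1)) * int n)"
    using reflect_other_column by (simp add: vertex_of_eq_iff)
  also have "\<dots> = (nat (int n - p) + 1, nat ((- k + half * p * (p - 1) + 1) mod int m) + 1)"
    using vertex_of_add_mult assms by (simp add: p_def)
  also have "\<dots> = sigma2 n m (i, j)"
  proof -
    have "int (refl_perm m j - 1 + ell i) = (1 - int j) mod int m + int (ell i)"
      using refl_perm_in[of j m] refl_perm_eq_mod[of j m] assms by simp
    then have "int ((refl_perm m j - 1 + ell i) mod m) = (1 - int j + int (ell i)) mod int m"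
      by (simp add: of_nat_mod mod_add_left_eq)
    also have "\<dots> = (- k + half * p * (p - 1) + 1) mod int m"
      using ell_cong[OF assms(1)] by (simp add: mod_eq_dvd_iff p_def k_def algebra_simps)
    finally have "(refl_perm m j - 1 + ell i) mod m = nat ((- k + half * p * (p - 1) + 1) mod int m)"
      by linarith
    then show ?thesis
      using v assms by (simp add: sigma2_def wr_def refl_perm_def cpow_def p_def)
  qed
  finally show ?thesis .
qed

lemma sigma2_eq_lift: "sigma2 n m = lift n m (reflect 0)"
proof
  fix v show "sigma2 n m v = lift n m (reflect 0) v"
  proof (cases "v \<in> verts n m")
    case True
    then obtain i j where "v = (i, j)" "1 \<le> i" "i \<le> n" "1 \<le> j" "j \<le> m"
      by (auto simp: verts_def)
    then show ?thesis
      using sigma2_first_column sigma2_other_column by (cases "i = 1") auto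
  qed (simp add: sigma2_def wr_def lift_def)
qed

end

section \<open>The group generated by the two generators\<close>

context odd_cycle_blowup
begin

abbreviation G :: "(nat \<times> nat \<Rightarrow> nat \<times> nat) monoid" where "G \<equiv> Aut n m"
abbreviation \<sigma>\<^sub>1 :: "nat \<times> nat \<Rightarrow> nat \<times> nat" where "\<sigma>\<^sub>1 \<equiv> sigma1 n m"
abbreviation \<sigma>\<^sub>2 :: "nat \<times> nat \<Rightarrow> nat \<times> nat" where "\<sigma>\<^sub>2 \<equiv> sigma2 n m"

sublocale Aut: group G by (rule group_Aut)

lemma one_eq_lift: "\<one>\<^bsub>G\<^esub> = lift n m (\<lambda>x. x)"
  by (simp add: Aut_one lift_id)

lemma sigma1_in_Aut: "\<sigma>\<^sub>1 \<in> carrier G"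
proof (rule Aut_carrierI)
  show "\<sigma>\<^sub>1 \<in> Bij (verts n m)"
    unfolding sigma1_eq_lift by (rule lift_Bij[OF respects_mod_shift[where a = "- 1"]]) simp
  show "fst (\<sigma>\<^sub>1 u) = cyc_succ n (fst u)" if "u \<in> verts n m" for u
    using that by (auto simp: sigma1_def wr_def split_beta)
qed (rule cycle_adj_cyc_succ)

lemma sigma2_in_Aut: "\<sigma>\<^sub>2 \<in> carrier G"
proof (rule Aut_carrierI)
  have "N dvd reflect (int m - 1) (reflect 0 x) - x" for x
  proof -
    have "N dvd stretch (int m) x - x" by (simp add: stretch_def)
    then show ?thesis using reflect_reflect[of "int m - 1" x] dvd_add by fastforce
  qed
  then show "\<sigma>\<^sub>2 \<in> Bij (verts n m)"
    unfolding sigma2_eq_lift by (intro lift_Bij[OF respects_mod_reflect])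
  show "fst (\<sigma>\<^sub>2 u) = refl_perm n (fst u)" if "u \<in> verts n m" for u
    using that by (auto simp: sigma2_def wr_def split_beta)
qed (rule cycle_adj_refl_perm)

lemma sigma1_pow: "\<sigma>\<^sub>1 [^]\<^bsub>G\<^esub> a = lift n m (\<lambda>x. x + int a)"
proof (induction a)
  case 0
  then show ?case by (simp add: one_eq_lift)
next
  case (Suc a)
  have "\<sigma>\<^sub>1 [^]\<^bsub>G\<^esub> Suc a = lift n m (\<lambda>x. x + int a) \<otimes>\<^bsub>G\<^esub> lift n m (\<lambda>x. x + 1)"
    using Suc by (simp add: sigma1_eq_lift)
  also have "\<dots> = lift n m ((\<lambda>x. x + int a) \<circ> (\<lambda>x. x + 1))"
    using Suc sigma1_in_Aut sigma1_eq_lift Aut.nat_pow_closed[OF sigma1_in_Aut, of a]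
    by (intro lift_mult respects_mod_shift) auto
  finally show ?case by (simp add: comp_def add.assoc)
qed

lemma sigma2_pow:
  "\<sigma>\<^sub>2 [^]\<^bsub>G\<^esub> k = lift n m (if even k then stretch (int (k div 2)) else reflect (int (k div 2)))"
proof (induction k)
  case 0
  have "stretch 0 = (\<lambda>x. x)" by (auto simp: stretch_def)
  then show ?case by (simp add: one_eq_lift)
next
  case (Suc k)
  let ?F = "if even k then stretch (int (k div 2)) else reflect (int (k div 2))"
  have "\<sigma>\<^sub>2 [^]\<^bsub>G\<^esub> Suc k = lift n m ?F \<otimes>\<^bsub>G\<^esub> lift n m (reflect 0)"
    using Suc by (simp add: sigma2_eq_lift)
  also have "\<dots> = lift n m (?F \<circ> reflect 0)"
    using Suc sigma2_in_Aut sigma2_eq_lift Aut.nat_pow_closed[OF sigma2_in_Aut, of k]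
    by (intro lift_mult) (auto simp: respects_mod_stretch respects_mod_reflect)
  also have "\<dots> = lift n m
      (if even (Suc k) then stretch (int (Suc k div 2)) else reflect (int (Suc k div 2)))"
    using stretch_reflect reflect_reflect[unfolded add.commute[of _ 1]] by (intro lift_cong) auto
  finally show ?case .
qed

lemma sigma1_pow_eq_one_iff: "\<sigma>\<^sub>1 [^]\<^bsub>G\<^esub> a = \<one>\<^bsub>G\<^esub> \<longleftrightarrow> m * n dvd a"
proof -
  have "\<sigma>\<^sub>1 [^]\<^bsub>G\<^esub> a = \<one>\<^bsub>G\<^esub> \<longleftrightarrow> (\<forall>x. N dvd x + int a - x)"
    unfolding sigma1_pow one_eq_lift by (rule lift_eq_lift_iff[OF respects_mod_shift respects_mod_id])
  then show ?thesis by (simp flip: of_nat_mult)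
qed

lemma ord_sigma1: "Aut.ord \<sigma>\<^sub>1 = m * n"
  by (simp add: Aut.ord_unique[OF sigma1_in_Aut] sigma1_pow_eq_one_iff)

lemma sigma2_pow_eq_one_iff: "\<sigma>\<^sub>2 [^]\<^bsub>G\<^esub> k = \<one>\<^bsub>G\<^esub> \<longleftrightarrow> 2 * m dvd k"
proof (cases "even k")
  case True
  then obtain b where k: "k = 2 * b" by blast
  have "\<sigma>\<^sub>2 [^]\<^bsub>G\<^esub> k = \<one>\<^bsub>G\<^esub> \<longleftrightarrow> (\<forall>x. N dvd stretch (int b) x - x)"
    unfolding sigma2_pow one_eq_lift using True
    by (simp add: k lift_eq_lift_iff[OF respects_mod_stretch respects_mod_id])
  also have "\<dots> \<longleftrightarrow> m dvd b"
  proof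
    assume "\<forall>x. N dvd stretch (int b) x - x"
    then have "N dvd stretch (int b) 1 - 1" ..
    then have "int m * int n dvd int b * int n" by (simp add: stretch_def mult.commute)
    then have "int m dvd int b" using n_ge_3 by (subst (asm) dvd_times_right_cancel_iff) simp_all
    then show "m dvd b" by simp
  next
    assume "m dvd b"
    then have "N dvd int b * int n" by (simp add: mult_dvd_mono)
    then show "\<forall>x. N dvd stretch (int b) x - x" by (simp add: stretch_def mult.commute)
  qed
  finally show ?thesis by (simp add: k)
next
  case False
  then obtain b where k: "k = 2 * b + 1" using oddE by blast
  have "\<sigma>\<^sub>2 [^]\<^bsub>G\<^esub> k \<noteq> \<one>\<^bsub>G\<^esub>"
  proof
    assume "\<sigma>\<^sub>2 [^]\<^bsub>G\<^esub> k = \<one>\<^bsub>G\<^esub>"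
    then have "N dvd reflect (int b) 1 - 1"
      unfolding sigma2_pow one_eq_lift using False
      by (simp add: k lift_eq_lift_iff[OF respects_mod_reflect respects_mod_id])
    moreover have "reflect (int b) 1 - 1 = - (2 + int n * int b)" by (simp add: reflect_def)
    ultimately have "N dvd 2 + int n * int b" by (metis dvd_minus_iff)
    then have "int n dvd 2 + int n * int b" by (rule dvd_mult_right)
    then have "int n dvd 2" by (simp add: dvd_add_left_iff)
    then have "n dvd 2" using int_dvd_int_iff[of n 2] by simp
    then have "n \<le> 2" by (intro dvd_imp_le) simp_all
    then show False using n_ge_3 by simp
  qed
  moreover have "\<not> 2 * m dvd k" using False dvd_mult_left[of 2 m k] by blast
  ultimately show ?thesis by simp
qed

lemma ord_sigma2: "Aut.ord \<sigma>\<^sub>2 = 2 * m"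
  by (simp add: Aut.ord_unique[OF sigma2_in_Aut] sigma2_pow_eq_one_iff)

lemma lift_shift_in_Aut: "lift n m (\<lambda>x. x + int a) \<in> carrier G"
  using Aut.nat_pow_closed[OF sigma1_in_Aut, of a] by (simp add: sigma1_pow)

lemma lift_reflect_in_Aut: "lift n m (reflect (int b)) \<in> carrier G"
  using Aut.nat_pow_closed[OF sigma2_in_Aut, of "2 * b + 1"] unfolding sigma2_pow by simp

lemma sigma2_mult_sigma1_pow:
  "\<sigma>\<^sub>2 \<otimes>\<^bsub>G\<^esub> \<sigma>\<^sub>1 [^]\<^bsub>G\<^esub> a =
     \<sigma>\<^sub>1 [^]\<^bsub>G\<^esub> nat (reflect 0 (int a) mod N) \<otimes>\<^bsub>G\<^esub> \<sigma>\<^sub>2 [^]\<^bsub>G\<^esub> (2 * nat ((- int a) mod int m) + 1)"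
proof -
  define a' b' where "a' = reflect 0 (int a) mod N" and "b' = (- int a) mod int m"
  have "0 \<le> a'" "0 \<le> b'" using m_ge_3 n_ge_3 by (simp_all add: a'_def b'_def)
  then have pow_eqs: "\<sigma>\<^sub>1 [^]\<^bsub>G\<^esub> nat a' = lift n m (\<lambda>x. x + a')"
      "\<sigma>\<^sub>2 [^]\<^bsub>G\<^esub> (2 * nat b' + 1) = lift n m (reflect b')"
    unfolding sigma1_pow sigma2_pow by simp_all
  have "\<sigma>\<^sub>2 \<otimes>\<^bsub>G\<^esub> \<sigma>\<^sub>1 [^]\<^bsub>G\<^esub> a = lift n m (reflect 0 \<circ> (\<lambda>x. x + int a))"
    unfolding sigma2_eq_lift sigma1_pow
    by (rule lift_mult[OF _ lift_shift_in_Aut respects_mod_reflect]) (use lift_reflect_in_Aut[of 0] in simp)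
  also have "\<dots> = lift n m ((\<lambda>x. x + a') \<circ> reflect b')"
  proof (rule lift_cong)
    fix x
    have "N dvd reflect 0 (x + int a) - (reflect (- int a) x + reflect 0 (int a))"
      by (rule reflect_shift)
    moreover have "N dvd reflect (- int a) x - reflect b' x"
      by (rule reflect_cong) (simp add: b'_def)
    moreover have "N dvd reflect 0 (int a) - a'"
      by (simp add: a'_def)
    ultimately have "N dvd (reflect 0 (x + int a) - (reflect (- int a) x + reflect 0 (int a)))
        + (reflect (- int a) x - reflect b' x) + (reflect 0 (int a) - a')"
      by (intro dvd_add)
    then show "N dvd (reflect 0 \<circ> (\<lambda>x. x + int a)) x - ((\<lambda>x. x + a') \<circ> reflect b') x"
      by (simp add: algebra_simps)
  qed
  also have "\<dots> = \<sigma>\<^sub>1 [^]\<^bsub>G\<^esub> nat a' \<otimes>\<^bsub>G\<^esub> \<sigma>\<^sub>2 [^]\<^bsub>G\<^esub> (2 * nat b' + 1)"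
    unfolding pow_eqs using pow_eqs Aut.nat_pow_closed[OF sigma1_in_Aut, of "nat a'"]
      Aut.nat_pow_closed[OF sigma2_in_Aut, of "2 * nat b' + 1"]
    by (intro lift_mult[symmetric] respects_mod_shift) simp_all
  finally show ?thesis by (simp add: a'_def b'_def)
qed

lemma inv_sigma1: "inv\<^bsub>G\<^esub> \<sigma>\<^sub>1 = \<sigma>\<^sub>1 [^]\<^bsub>G\<^esub> (m * n - 1)"
  using Aut.inv_eq_nat_pow_ord[OF sigma1_in_Aut] ord_sigma1 m_ge_3 n_ge_3 by simp

lemma inv_sigma2: "inv\<^bsub>G\<^esub> \<sigma>\<^sub>2 = \<sigma>\<^sub>2 [^]\<^bsub>G\<^esub> (2 * m - 1)"
  using Aut.inv_eq_nat_pow_ord[OF sigma2_in_Aut] ord_sigma2 m_ge_3 by simp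

lemma sigma2_mult_sigma1:
  "\<sigma>\<^sub>2 \<otimes>\<^bsub>G\<^esub> \<sigma>\<^sub>1 = \<sigma>\<^sub>1 [^]\<^bsub>G\<^esub> (m * n - 1) \<otimes>\<^bsub>G\<^esub> \<sigma>\<^sub>2 [^]\<^bsub>G\<^esub> (2 * m - 1)"
proof -
  have "(- 1) mod N = N - 1" "(- 1) mod int m = int m - 1"
    using m_ge_3 n_ge_3 by (simp_all add: zmod_minus1)
  then have "nat (reflect 0 1 mod N) = m * n - 1" "2 * nat ((- 1) mod int m) + 1 = 2 * m - 1"
    using m_ge_3 by (simp_all add: reflect_def nat_diff_distrib' flip: of_nat_mult)
  then show ?thesis
    using sigma2_mult_sigma1_pow[of 1] sigma1_in_Aut by simp
qed

definition sigma_word :: "nat \<times> nat \<Rightarrow> nat \<times> nat \<Rightarrow> nat \<times> nat" where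
  "sigma_word = (\<lambda>(a, k). \<sigma>\<^sub>1 [^]\<^bsub>G\<^esub> a \<otimes>\<^bsub>G\<^esub> \<sigma>\<^sub>2 [^]\<^bsub>G\<^esub> k)"

lemma sigma2_pow_mult_sigma1_pow:
  "\<sigma>\<^sub>2 [^]\<^bsub>G\<^esub> (k::nat) \<otimes>\<^bsub>G\<^esub> \<sigma>\<^sub>1 [^]\<^bsub>G\<^esub> (a::nat) \<in> range sigma_word"
proof (induction k arbitrary: a)
  case 0
  have "\<sigma>\<^sub>2 [^]\<^bsub>G\<^esub> (0::nat) \<otimes>\<^bsub>G\<^esub> \<sigma>\<^sub>1 [^]\<^bsub>G\<^esub> a = sigma_word (a, 0)"
    using sigma1_in_Aut by (simp add: sigma_word_def)
  then show ?case by (metis rangeI)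
next
  case (Suc k)
  obtain a' b :: nat where swap: "\<sigma>\<^sub>2 \<otimes>\<^bsub>G\<^esub> \<sigma>\<^sub>1 [^]\<^bsub>G\<^esub> a = \<sigma>\<^sub>1 [^]\<^bsub>G\<^esub> a' \<otimes>\<^bsub>G\<^esub> \<sigma>\<^sub>2 [^]\<^bsub>G\<^esub> b"
    using sigma2_mult_sigma1_pow by blast
  obtain c d :: nat where IH: "\<sigma>\<^sub>2 [^]\<^bsub>G\<^esub> k \<otimes>\<^bsub>G\<^esub> \<sigma>\<^sub>1 [^]\<^bsub>G\<^esub> a' = \<sigma>\<^sub>1 [^]\<^bsub>G\<^esub> c \<otimes>\<^bsub>G\<^esub> \<sigma>\<^sub>2 [^]\<^bsub>G\<^esub> d"
    using Suc.IH[of a'] by (auto simp: sigma_word_def)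
  note closed = Aut.nat_pow_closed[OF sigma1_in_Aut] Aut.nat_pow_closed[OF sigma2_in_Aut] sigma2_in_Aut
  have "\<sigma>\<^sub>2 [^]\<^bsub>G\<^esub> Suc k \<otimes>\<^bsub>G\<^esub> \<sigma>\<^sub>1 [^]\<^bsub>G\<^esub> a = \<sigma>\<^sub>2 [^]\<^bsub>G\<^esub> k \<otimes>\<^bsub>G\<^esub> (\<sigma>\<^sub>2 \<otimes>\<^bsub>G\<^esub> \<sigma>\<^sub>1 [^]\<^bsub>G\<^esub> a)"
    using closed by (simp add: Aut.m_assoc)
  also have "\<dots> = (\<sigma>\<^sub>2 [^]\<^bsub>G\<^esub> k \<otimes>\<^bsub>G\<^esub> \<sigma>\<^sub>1 [^]\<^bsub>G\<^esub> a') \<otimes>\<^bsub>G\<^esub> \<sigma>\<^sub>2 [^]\<^bsub>G\<^esub> b"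
    using closed by (simp add: swap Aut.m_assoc)
  also have "\<dots> = \<sigma>\<^sub>1 [^]\<^bsub>G\<^esub> c \<otimes>\<^bsub>G\<^esub> \<sigma>\<^sub>2 [^]\<^bsub>G\<^esub> (d + b)"
    using closed by (simp add: IH Aut.m_assoc Aut.nat_pow_mult)
  finally show ?case by (auto simp: sigma_word_def)
qed

lemma sigma_word_mult_closed:
  assumes "x \<in> range sigma_word" "y \<in> range sigma_word"
  shows "x \<otimes>\<^bsub>G\<^esub> y \<in> range sigma_word"
proof -
  obtain a k c d :: nat where x: "x = \<sigma>\<^sub>1 [^]\<^bsub>G\<^esub> a \<otimes>\<^bsub>G\<^esub> \<sigma>\<^sub>2 [^]\<^bsub>G\<^esub> k"
    and y: "y = \<sigma>\<^sub>1 [^]\<^bsub>G\<^esub> c \<otimes>\<^bsub>G\<^esub> \<sigma>\<^sub>2 [^]\<^bsub>G\<^esub> d"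
    using assms by (auto simp: sigma_word_def)
  obtain e f :: nat where swap: "\<sigma>\<^sub>2 [^]\<^bsub>G\<^esub> k \<otimes>\<^bsub>G\<^esub> \<sigma>\<^sub>1 [^]\<^bsub>G\<^esub> c = \<sigma>\<^sub>1 [^]\<^bsub>G\<^esub> e \<otimes>\<^bsub>G\<^esub> \<sigma>\<^sub>2 [^]\<^bsub>G\<^esub> f"
    using sigma2_pow_mult_sigma1_pow[of k c] by (auto simp: sigma_word_def)
  note closed = sigma1_in_Aut sigma2_in_Aut Aut.nat_pow_closed[OF sigma1_in_Aut]
    Aut.nat_pow_closed[OF sigma2_in_Aut]
  have "x \<otimes>\<^bsub>G\<^esub> y = \<sigma>\<^sub>1 [^]\<^bsub>G\<^esub> a \<otimes>\<^bsub>G\<^esub> (\<sigma>\<^sub>2 [^]\<^bsub>G\<^esub> k \<otimes>\<^bsub>G\<^esub> \<sigma>\<^sub>1 [^]\<^bsub>G\<^esub> c) \<otimes>\<^bsub>G\<^esub> \<sigma>\<^sub>2 [^]\<^bsub>G\<^esub> d"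
    using closed by (simp add: x y Aut.m_assoc)
  also have "\<dots> = \<sigma>\<^sub>1 [^]\<^bsub>G\<^esub> (a + e) \<otimes>\<^bsub>G\<^esub> \<sigma>\<^sub>2 [^]\<^bsub>G\<^esub> (f + d)"
    using closed by (simp add: swap Aut.m_assoc flip: Aut.nat_pow_mult)
  finally show ?thesis by (auto simp: sigma_word_def)
qed

lemma generate_subset_range_sigma_word: "generate G {\<sigma>\<^sub>1, \<sigma>\<^sub>2} \<subseteq> range sigma_word"
proof
  fix x assume "x \<in> generate G {\<sigma>\<^sub>1, \<sigma>\<^sub>2}"
  then show "x \<in> range sigma_word"
  proof (induction rule: generate.induct)
    case one
    have "\<one>\<^bsub>G\<^esub> = sigma_word (0, 0)" by (simp add: sigma_word_def)
    then show ?case by (metis rangeI)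
  next
    case (incl h)
    have "\<sigma>\<^sub>1 = sigma_word (1, 0)" "\<sigma>\<^sub>2 = sigma_word (0, 1)"
      using sigma1_in_Aut sigma2_in_Aut by (simp_all add: sigma_word_def)
    then show ?case using incl by (metis empty_iff insert_iff rangeI)
  next
    case (inv h)
    have "inv\<^bsub>G\<^esub> \<sigma>\<^sub>1 = sigma_word (m * n - 1, 0)" "inv\<^bsub>G\<^esub> \<sigma>\<^sub>2 = sigma_word (0, 2 * m - 1)"
      using sigma1_in_Aut sigma2_in_Aut by (simp_all add: sigma_word_def inv_sigma1 inv_sigma2)
    then show ?case using inv by (metis empty_iff insert_iff rangeI)
  next
    case (eng h1 h2)
    then show ?case by (simp add: sigma_word_mult_closed)
  qed
qed

lemma range_sigma_word: "range sigma_word = sigma_word ` ({..<m * n} \<times> {..<2 * m})"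
proof -
  have "sigma_word (a, k) \<in> sigma_word ` ({..<m * n} \<times> {..<2 * m})" for a k
  proof (rule image_eqI)
    show "sigma_word (a, k) = sigma_word (a mod (m * n), k mod (2 * m))"
      using Aut.nat_pow_mod_ord[OF sigma1_in_Aut] Aut.nat_pow_mod_ord[OF sigma2_in_Aut]
      by (simp add: sigma_word_def ord_sigma1 ord_sigma2)
    show "(a mod (m * n), k mod (2 * m)) \<in> {..<m * n} \<times> {..<2 * m}"
      using m_ge_3 n_ge_3 by simp
  qed
  then show ?thesis by auto
qed

lemma generate_sigma: "generate G {\<sigma>\<^sub>1, \<sigma>\<^sub>2} = sigma_word ` ({..<m * n} \<times> {..<2 * m})"
proof
  show "generate G {\<sigma>\<^sub>1, \<sigma>\<^sub>2} \<subseteq> sigma_word ` ({..<m * n} \<times> {..<2 * m})"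
    using generate_subset_range_sigma_word range_sigma_word by simp
next
  have sub: "subgroup (generate G {\<sigma>\<^sub>1, \<sigma>\<^sub>2}) G"
    using sigma1_in_Aut sigma2_in_Aut by (intro Aut.generate_is_subgroup) auto
  have "h [^]\<^bsub>G\<^esub> (k::nat) \<in> generate G {\<sigma>\<^sub>1, \<sigma>\<^sub>2}" if "h \<in> {\<sigma>\<^sub>1, \<sigma>\<^sub>2}" for h k
    using Aut.subgroup_int_pow_closed[OF sub generate.incl[OF that], of "int k"] by (simp add: int_pow_int)
  then show "sigma_word ` ({..<m * n} \<times> {..<2 * m}) \<subseteq> generate G {\<sigma>\<^sub>1, \<sigma>\<^sub>2}"
    by (auto simp: sigma_word_def intro: subgroup.m_closed[OF sub])
qed

lemma sigma_word_vertex_of_0: "sigma_word (a, k) (vertex_of n m 0) = vertex_of n m (int a)"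
proof -
  have "(\<sigma>\<^sub>2 [^]\<^bsub>G\<^esub> k) (vertex_of n m 0) = vertex_of n m 0"
    unfolding sigma2_pow
    by (simp add: lift_vertex_of respects_mod_stretch respects_mod_reflect stretch_def reflect_def)
  moreover have "(\<sigma>\<^sub>1 [^]\<^bsub>G\<^esub> a) (vertex_of n m 0) = vertex_of n m (int a)"
    unfolding sigma1_pow by (simp add: lift_vertex_of respects_mod_shift)
  ultimately show ?thesis
    using sigma1_in_Aut sigma2_in_Aut vertex_of_in_verts
    by (simp add: sigma_word_def Aut_mult compose_def)
qed

lemma inj_on_sigma_word: "inj_on sigma_word ({..<m * n} \<times> {..<2 * m})"
proof (rule inj_onI, clarify)
  fix a k a' k'
  assume box: "a < m * n" "k < 2 * m" "a' < m * n" "k' < 2 * m"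
    and eq: "sigma_word (a, k) = sigma_word (a', k')"
  then have "vertex_of n m (int a) = vertex_of n m (int a')"
    using sigma_word_vertex_of_0[of a k] sigma_word_vertex_of_0[of a' k'] by simp
  then have dvd: "N dvd int a - int a'" by (simp add: vertex_of_eq_iff)
  have "int a - int a' = 0"
  proof (rule ccontr)
    assume "int a - int a' \<noteq> 0"
    then have "\<bar>N\<bar> \<le> \<bar>int a - int a'\<bar>" using dvd by (rule dvd_imp_le_int)
    moreover have "\<bar>int a - int a'\<bar> < N" using box by (simp flip: of_nat_mult)
    ultimately show False by simp
  qed
  then have a: "a = a'" by simp
  note closed = Aut.nat_pow_closed[OF sigma1_in_Aut] Aut.nat_pow_closed[OF sigma2_in_Aut]
  have "\<sigma>\<^sub>2 [^]\<^bsub>G\<^esub> k = \<sigma>\<^sub>2 [^]\<^bsub>G\<^esub> k'"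
    using eq closed by (simp add: sigma_word_def a)
  then have "k = k'"
    using Aut.ord_inj[OF sigma2_in_Aut] box by (simp add: ord_sigma2 inj_on_def)
  with a show "a = a' \<and> k = k'" ..
qed

lemma card_generate_sigma: "card (generate G {\<sigma>\<^sub>1, \<sigma>\<^sub>2}) = 2 * m ^ 2 * n"
  by (simp add: generate_sigma card_image[OF inj_on_sigma_word] power2_eq_square)

lemma ord_sigma2_mult_sigma1: "Aut.ord (\<sigma>\<^sub>2 \<otimes>\<^bsub>G\<^esub> \<sigma>\<^sub>1) = 2"
proof -
  have closed: "\<sigma>\<^sub>2 \<otimes>\<^bsub>G\<^esub> \<sigma>\<^sub>1 \<in> carrier G"
    using sigma1_in_Aut sigma2_in_Aut by simp
  have "inv\<^bsub>G\<^esub> (\<sigma>\<^sub>2 \<otimes>\<^bsub>G\<^esub> \<sigma>\<^sub>1) = inv\<^bsub>G\<^esub> \<sigma>\<^sub>1 \<otimes>\<^bsub>G\<^esub> inv\<^bsub>G\<^esub> \<sigma>\<^sub>2"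
    by (rule Aut.inv_mult_group[OF sigma2_in_Aut sigma1_in_Aut])
  also have "\<dots> = \<sigma>\<^sub>2 \<otimes>\<^bsub>G\<^esub> \<sigma>\<^sub>1"
    by (simp add: inv_sigma1 inv_sigma2 sigma2_mult_sigma1)
  finally have "(\<sigma>\<^sub>2 \<otimes>\<^bsub>G\<^esub> \<sigma>\<^sub>1) [^]\<^bsub>G\<^esub> (2::nat) = \<one>\<^bsub>G\<^esub>"
    using closed Aut.r_inv[OF closed] by (simp add: numeral_2_eq_2)
  then have "Aut.ord (\<sigma>\<^sub>2 \<otimes>\<^bsub>G\<^esub> \<sigma>\<^sub>1) dvd 2" using Aut.pow_eq_id[OF closed] by blast
  moreover have "\<sigma>\<^sub>2 \<otimes>\<^bsub>G\<^esub> \<sigma>\<^sub>1 \<noteq> \<one>\<^bsub>G\<^esub>"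
  proof
    assume "\<sigma>\<^sub>2 \<otimes>\<^bsub>G\<^esub> \<sigma>\<^sub>1 = \<one>\<^bsub>G\<^esub>"
    then have "sigma_word (m * n - 1, 2 * m - 1) = sigma_word (0, 0)"
      by (simp add: sigma_word_def sigma2_mult_sigma1)
    then have "m * n - 1 = 0"
      using inj_on_sigma_word m_ge_3 n_ge_3 by (auto dest: inj_onD)
    moreover have "3 * 3 \<le> m * n" using mult_le_mono[OF m_ge_3 n_ge_3] .
    ultimately show False by simp
  qed
  then have "Aut.ord (\<sigma>\<^sub>2 \<otimes>\<^bsub>G\<^esub> \<sigma>\<^sub>1) \<noteq> 1" using Aut.ord_eq_1[OF closed] by blast
  ultimately show ?thesis
    using dvd_imp_le[of "Aut.ord (\<sigma>\<^sub>2 \<otimes>\<^bsub>G\<^esub> \<sigma>\<^sub>1)" 2] by (cases "Aut.ord (\<sigma>\<^sub>2 \<otimes>\<^bsub>G\<^esub> \<sigma>\<^sub>1)") auto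
qed

end

theorem lemma4p1:
  fixes m s n :: nat
  assumes "m \<ge> 3" and "odd m" and "s > 0" and "n = s * m"
  shows "group.ord (Aut n m) (sigma1 n m) = m * n \<and>
         group.ord (Aut n m) (sigma2 n m) = 2 * m \<and>
         group.ord (Aut n m) (sigma2 n m \<otimes>\<^bsub>Aut n m\<^esub> sigma1 n m) = 2 \<and>
         card (generate (Aut n m) {sigma1 n m, sigma2 n m}) = 2 * m ^ 2 * n"
proof -
  interpret odd_cycle_blowup m s n
    using assms by unfold_locales
  show ?thesis
    using ord_sigma1 ord_sigma2 ord_sigma2_mult_sigma1 card_generate_sigma by simp
qed

end
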